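(* Let $k=2j$ with $j\ge1$, let $p\in\mathbb{S}^n$, $R\in(0,\pi/2)$, $B_R=\{q:\mathbf{d}_p(q)\le R\}$, and let $x,y\in\partial B_R$ with $x\neq y$; set $r=\mathbf{d}_y(x)$. Then \[\tan R\,\langle\Psi_y,\nabla\mathbf{d}_p\rangle\big|_x=-\sum_{i=0}^{j-1}a_{i+1}(1-\cos r)^{-i},\] where $a_1=\frac{1}{2j-1}$ and $a_{i+1}=\frac{2(j-i)}{2j-(i+1)}a_i$ for $i=1,\dots,j-1$.
   Context: $\mathbb{S}^n$ is the unit round sphere with Levi-Civita connection $\nabla$; $\mathbf{d}_q$ is geodesic distance from $q$. $I_k(r)=\int_0^r\sin^{k-1}s\,ds$, $\varphi(t)=I_k(t)\sin^{1-k}t$ for $t\in(0,\pi)$, $\varphi(0)=0$, $\Phi_q=(\varphi\circ\mathbf{d}_q)\nabla\mathbf{d}_q$ on $\mathbb{S}^n\setminus\{-q\}$, and $\Psi_q:=\Phi_{-q}$ on $\mathbb{S}^n\setminus\{q\}$. *)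

theory Defs
  imports "HOL-Analysis.Analysis"
begin

text \<open>The unit round sphere S^n is modelled as the unit sphere of a Euclidean space 'a
  (so n + 1 = DIM('a)).  Geodesic distance from q.\<close>
definition gdist :: "'a::euclidean_space \<Rightarrow> 'a \<Rightarrow> real" where
  "gdist q x = arccos (inner q x)"

definition sgrad :: "('a::euclidean_space \<Rightarrow> real) \<Rightarrow> 'a \<Rightarrow> 'a" where
  "sgrad f x = (THE v. inner v x = 0 \<and>
      (f has_derivative (\<lambda>h. inner v h)) (at x within sphere 0 1))"

definition Ik :: "nat \<Rightarrow> real \<Rightarrow> real" where
  "Ik k r = integral {0..r} (\<lambda>s. sin s ^ (k - 1))"

definition phik :: "nat \<Rightarrow> real \<Rightarrow> real" where
  "phik k t = (if t = 0 then 0 else Ik k t / sin t ^ (k - 1))"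

definition Phi :: "nat \<Rightarrow> 'a::euclidean_space \<Rightarrow> 'a \<Rightarrow> 'a" where
  "Phi k q x = phik k (gdist q x) *\<^sub>R sgrad (gdist q) x"

definition Psi :: "nat \<Rightarrow> 'a::euclidean_space \<Rightarrow> 'a \<Rightarrow> 'a" where
  "Psi k q = Phi k (- q)"

fun coef :: "nat \<Rightarrow> nat \<Rightarrow> real" where
  "coef j 0 = 0"
| "coef j (Suc 0) = 1 / (2 * real j - 1)"
| "coef j (Suc (Suc i)) =
     2 * (real j - real (Suc i)) / (2 * real j - real (Suc (Suc i))) * coef j (Suc i)"

end

theory Submission
  imports Defs
begin

(* On the unit sphere the gradient of d_q at x is -(q - cos d x)/sin d with d = d_q(x), and
   d_{-q} = pi - d_q.  Hence Psi_y(x) = phi(pi - r)/sin r (y - cos r x), and since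
   <p,x> = <p,y> = cos R on the boundary of B_R, pairing it with the gradient of d_p gives
   tan R <Psi_y, grad d_p>(x) = -phi(pi - r)(1 - cos r)/sin r.  For k = 2j the integral has the
   closed form I_k(t) = (1 - cos t)^j sum a_{i+1} (1 + cos t)^(j-1-i): differentiating, the
   recursion for the a_i makes the derivative telescope to sin^(2j-1) t.  At t = pi - r, where
   sin^(2j) t = (1 - cos r)^j (1 + cos r)^j, everything cancels to the stated sum. *)

lemma has_derivative_inner_self_sphere:
  fixes x :: "'a::euclidean_space"
  assumes x: "x \<in> sphere 0 1"
  shows "((\<lambda>y. inner x y) has_derivative (\<lambda>h. 0)) (at x within sphere 0 1)"
proof -
  have "((\<lambda>y. 1 - inner (y - x) (y - x) / 2) has_derivative (\<lambda>h. 0)) (at x within sphere 0 1)"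
    by (auto intro!: derivative_eq_intros)
  then show ?thesis
  proof (rule has_derivative_transform_within[OF _ zero_less_one x])
    fix y :: 'a assume "y \<in> sphere 0 1"
    then have "inner y y = 1" "inner x x = 1" using x by (auto simp: dot_square_norm)
    then show "1 - inner (y - x) (y - x) / 2 = inner x y"
      by (simp add: inner_diff_left inner_diff_right inner_commute field_simps)
  qed
qed

lemma sphere_tangent_derivative_unique:
  fixes x v1 v2 :: "'a::euclidean_space"
  assumes x: "x \<in> sphere 0 1" and "inner v1 x = 0" and "inner v2 x = 0"
    and d1: "(f has_derivative (\<lambda>h. inner v1 h)) (at x within sphere 0 1)"
    and d2: "(f has_derivative (\<lambda>h. inner v2 h)) (at x within sphere 0 1)"
  shows "v1 = v2"
proof (rule ccontr)
  assume "v1 \<noteq> v2"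
  define u where "u = v1 - v2"
  define w where "w = (1 / norm u) *\<^sub>R u"
  have nu: "norm u \<noteq> 0" using \<open>v1 \<noteq> v2\<close> by (simp add: u_def)
  have ww: "inner w w = 1" using nu by (simp add: w_def dot_square_norm)
  have wx: "inner w x = 0" using assms(2,3) by (simp add: w_def u_def inner_diff_left)
  have xx: "inner x x = 1" using x by (simp add: dot_square_norm)
  \<comment> \<open>The great circle through x in direction w tests both derivatives along w.\<close>
  define g where "g = (\<lambda>t::real. cos t *\<^sub>R x + sin t *\<^sub>R w)"
  have g_sphere: "range g \<subseteq> sphere 0 1"
  proof clarify
    fix t
    have "inner (g t) (g t) = (cos t)\<^sup>2 + (sin t)\<^sup>2"
      using ww wx xx
      by (simp add: g_def inner_add_left inner_add_right inner_commute power2_eq_square algebra_simps)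
    then show "g t \<in> sphere 0 1"
      using norm_ge_zero[of "g t"] by (simp add: dot_square_norm power2_eq_1_iff)
  qed
  have "(g has_vector_derivative (- sin 0 *\<^sub>R x + cos 0 *\<^sub>R w)) (at 0)"
    unfolding g_def by (auto intro!: derivative_eq_intros)
  then have dg: "(g has_derivative (\<lambda>t. t *\<^sub>R w)) (at 0)"
    by (simp add: has_vector_derivative_def)
  have "g 0 = x" by (simp add: g_def)
  have "((f \<circ> g) has_derivative (\<lambda>t. inner v1 (t *\<^sub>R w))) (at 0)"
       "((f \<circ> g) has_derivative (\<lambda>t. inner v2 (t *\<^sub>R w))) (at 0)"
    using diff_chain_within[OF dg has_derivative_subset[OF d1[folded \<open>g 0 = x\<close>] g_sphere]]
      diff_chain_within[OF dg has_derivative_subset[OF d2[folded \<open>g 0 = x\<close>] g_sphere]]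
    by (simp_all add: o_def)
  then have "(\<lambda>t. inner v1 (t *\<^sub>R w)) = (\<lambda>t. inner v2 (t *\<^sub>R w))"
    by (rule has_derivative_unique)
  then have "inner u w = 0" by (metis inner_diff_left right_minus_eq scaleR_one u_def)
  then show False using nu by (simp add: w_def)
qed

lemma sgrad_eqI:
  fixes x v :: "'a::euclidean_space"
  assumes "x \<in> sphere 0 1" and "inner v x = 0"
    and "(f has_derivative (\<lambda>h. inner v h)) (at x within sphere 0 1)"
  shows "sgrad f x = v"
  unfolding sgrad_def using assms sphere_tangent_derivative_unique[OF assms(1)] by blast

lemma sgrad_eq_tangential_part:
  fixes x v :: "'a::euclidean_space"
  assumes x: "x \<in> sphere 0 1"
    and f: "(f has_derivative (\<lambda>h. inner v h)) (at x within sphere 0 1)"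
  shows "sgrad f x = v - inner v x *\<^sub>R x"
proof (rule sgrad_eqI[OF x])
  show "inner (v - inner v x *\<^sub>R x) x = 0"
    using x by (simp add: inner_diff_left dot_square_norm)
  let ?c = "inner v x"
  have "((\<lambda>y. f y - ?c * inner x y + ?c * inner x y) has_derivative
         (\<lambda>h. inner v h - ?c * inner x h + ?c * 0)) (at x within sphere 0 1)"
    by (intro has_derivative_add has_derivative_diff f has_derivative_mult_right
        has_derivative_inner_self_sphere[OF x] derivative_intros)
  then show "(f has_derivative (\<lambda>h. inner (v - ?c *\<^sub>R x) h)) (at x within sphere 0 1)"
    by (simp add: inner_diff_right inner_commute)
qed

lemma inner_sphere_bounds:
  fixes q x :: "'a::euclidean_space"
  assumes "q \<in> sphere 0 1" and "x \<in> sphere 0 1"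
  shows "-1 \<le> inner q x" and "inner q x \<le> 1"
  using Cauchy_Schwarz_ineq2[of q x] assms by auto

lemma cos_gdist:
  fixes q x :: "'a::euclidean_space"
  assumes "q \<in> sphere 0 1" and "x \<in> sphere 0 1"
  shows "cos (gdist q x) = inner q x"
  unfolding gdist_def using inner_sphere_bounds[OF assms] by simp

lemma gdist_uminus:
  fixes q x :: "'a::euclidean_space"
  assumes "q \<in> sphere 0 1" and "x \<in> sphere 0 1"
  shows "gdist (- q) x = pi - gdist q x"
  unfolding gdist_def using inner_sphere_bounds[OF assms] by (simp add: arccos_minus)

lemma gdist_strict_bounds:
  fixes q x :: "'a::euclidean_space"
  assumes q: "q \<in> sphere 0 1" and x: "x \<in> sphere 0 1" and "x \<noteq> q" and "x \<noteq> - q"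
  shows "0 < gdist q x" and "gdist q x < pi"
proof -
  have qq: "inner q q = 1" and xx: "inner x x = 1"
    using q x by (simp_all add: dot_square_norm)
  have "inner q x \<noteq> 1"
  proof
    assume "inner q x = 1"
    then have "inner (x - q) (x - q) = 0"
      using qq xx by (simp add: inner_diff_left inner_diff_right inner_commute)
    then show False using \<open>x \<noteq> q\<close> by simp
  qed
  moreover have "inner q x \<noteq> -1"
  proof
    assume "inner q x = -1"
    then have "inner (x + q) (x + q) = 0"
      using qq xx by (simp add: inner_add_left inner_add_right inner_commute)
    then show False using \<open>x \<noteq> - q\<close> by (simp add: eq_neg_iff_add_eq_0)
  qed
  ultimately have "-1 < inner q x" "inner q x < 1"
    using inner_sphere_bounds[OF q x] by linarith+
  then show "0 < gdist q x" "gdist q x < pi"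
    by (simp_all add: gdist_def arccos_lt_bounded)
qed

lemma sgrad_gdist:
  fixes q x :: "'a::euclidean_space"
  assumes q: "q \<in> sphere 0 1" and x: "x \<in> sphere 0 1"
    and "0 < gdist q x" and "gdist q x < pi"
  shows "sgrad (gdist q) x
           = (- (1 / sin (gdist q x))) *\<^sub>R (q - cos (gdist q x) *\<^sub>R x)"
proof -
  define c where "c = inner q x"
  have "c \<noteq> 1" "c \<noteq> -1"
    using assms(3,4) by (auto simp: gdist_def c_def)
  with inner_sphere_bounds[OF q x] have c: "-1 < c" "c < 1"
    unfolding c_def by linarith+
  let ?v = "(- (1 / sin (gdist q x))) *\<^sub>R q"
  have "(gdist q has_derivative (\<lambda>h. inner ?v h)) (at x within sphere 0 1)"
    unfolding gdist_def using c
    by (auto intro!: derivative_eq_intros has_derivative_arccos[unfolded has_field_derivative_def]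
        simp: has_field_derivative_def c_def[symmetric] divide_inverse sin_arccos)
  then have "sgrad (gdist q) x = ?v - inner ?v x *\<^sub>R x"
    by (rule sgrad_eq_tangential_part[OF x])
  then show ?thesis
    by (simp add: cos_gdist[OF q x] c_def[symmetric] algebra_simps)
qed

lemma Psi_eq:
  fixes x y :: "'a::euclidean_space"
  assumes y: "y \<in> sphere 0 1" and x: "x \<in> sphere 0 1"
    and "0 < gdist y x" and "gdist y x < pi"
  shows "Psi k y x = (phik k (pi - gdist y x) / sin (gdist y x)) *\<^sub>R (y - cos (gdist y x) *\<^sub>R x)"
proof -
  define r where "r = gdist y x"
  have "- y \<in> sphere 0 1" using y by simp
  have "gdist (- y) x = pi - r"
    unfolding r_def by (rule gdist_uminus[OF y x])
  then have "sgrad (gdist (- y)) x = (- (1 / sin (pi - r))) *\<^sub>R (- y - cos (pi - r) *\<^sub>R x)"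
    using sgrad_gdist[OF \<open>- y \<in> sphere 0 1\<close> x] assms(3,4) by (simp add: r_def)
  also have "\<dots> = (1 / sin r) *\<^sub>R (y - cos r *\<^sub>R x)"
    by (simp add: algebra_simps)
  finally show ?thesis
    by (simp add: Psi_def Phi_def \<open>gdist (- y) x = pi - r\<close> r_def)
qed

lemma coef_first:
  assumes "j \<ge> 1"
  shows "(2 * real j - 1) * coef j 1 = 1"
  using assms by simp

lemma coef_after_last:
  assumes "j \<ge> 1"
  shows "coef j (j + 1) = 0"
  using assms by (cases j) simp_all

lemma coef_recurrence:
  assumes "i < j"
  shows "(2 * real j - real (i + 2)) * coef j (i + 2) = 2 * (real j - real (i + 1)) * coef j (i + 1)"
proof (cases "i + 1 = j")
  case True
  then show ?thesis using coef_after_last[of j] by (simp add: numeral_2_eq_2)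
next
  case False
  with assms have "2 * real j - real (i + 2) \<noteq> 0" by linarith
  then show ?thesis
    using coef.simps(3)[of j i] by (simp add: numeral_2_eq_2)
qed

text \<open>For P(w) = sum of coef j (i + 1) w^(j-1-i) this says j P - (2 - w) P' = w^(j-1); by
  coef_recurrence the terms telescope.\<close>
lemma coef_polynomial_identity:
  fixes w :: real
  assumes j: "j \<ge> 1"
  shows "real j * (\<Sum>i<j. coef j (i + 1) * w ^ (j - 1 - i))
           - (2 - w) * (\<Sum>i<j. coef j (i + 1) * (real (j - 1 - i) * w ^ (j - 1 - i - 1)))
         = w ^ (j - 1)"
proof -
  define T where "T m = (2 * real j - real m) * coef j m * w ^ (j - m)" for m
  have telescope: "coef j (i + 1) * (real j * w ^ (j - 1 - i) - (2 - w) * (real (j - 1 - i) * w ^ (j - 1 - i - 1)))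
      = T (i + 1) - T (Suc i + 1)" if "i < j" for i
  proof -
    define n where "n = j - 1 - i"
    have shift: "real n * w ^ (n - 1) * w = real n * w ^ n"
      by (cases n) simp_all
    have "coef j (i + 1) * (real j * w ^ n - (2 - w) * (real n * w ^ (n - 1)))
        = coef j (i + 1) * ((real j + real n) * w ^ n - 2 * real n * w ^ (n - 1))"
      using shift by (auto simp: algebra_simps)
    also have "\<dots> = T (i + 1) - T (Suc i + 1)"
    proof -
      have "T (Suc i + 1) = (2 * real j - real (i + 2)) * coef j (i + 2) * w ^ (n - 1)"
        by (simp add: T_def n_def del: coef.simps)
      also have "\<dots> = 2 * (real j - real (i + 1)) * coef j (i + 1) * w ^ (n - 1)"
        using coef_recurrence[OF that] by simp
      finally show ?thesis
        using that by (simp add: T_def n_def of_nat_diff algebra_simps)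
    qed
    finally show ?thesis by (simp add: n_def)
  qed
  have "real j * (\<Sum>i<j. coef j (i + 1) * w ^ (j - 1 - i))
          - (2 - w) * (\<Sum>i<j. coef j (i + 1) * (real (j - 1 - i) * w ^ (j - 1 - i - 1)))
        = (\<Sum>i<j. coef j (i + 1) * (real j * w ^ (j - 1 - i) - (2 - w) * (real (j - 1 - i) * w ^ (j - 1 - i - 1))))"
    by (simp add: sum_subtractf sum_distrib_left right_diff_distrib ac_simps)
  also have "\<dots> = (\<Sum>i<j. T (i + 1) - T (Suc i + 1))"
    using telescope by (intro sum.cong) simp_all
  also have "\<dots> = T 1 - T (j + 1)"
    using sum_lessThan_telescope'[of "\<lambda>i. T (i + 1)" j] by simp
  also have "\<dots> = w ^ (j - 1)"
    using coef_first[OF j] coef_after_last[OF j] by (simp add: T_def)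
  finally show ?thesis .
qed

lemma one_minus_cos_times_one_plus_cos: "(1 - cos x) * (1 + cos x) = (sin x)\<^sup>2"
  for x :: real
  using sin_cos_squared_add[of x] by (simp add: power2_eq_square algebra_simps)

lemma Ik_even_closed_form:
  assumes j: "j \<ge> 1" and t: "0 \<le> t"
  shows "Ik (2 * j) t = (1 - cos t) ^ j * (\<Sum>i<j. coef j (i + 1) * (1 + cos t) ^ (j - 1 - i))"
proof -
  define P where "P w = (\<Sum>i<j. coef j (i + 1) * w ^ (j - 1 - i))" for w :: real
  define P' where "P' w = (\<Sum>i<j. coef j (i + 1) * (real (j - 1 - i) * w ^ (j - 1 - i - 1)))" for w :: real
  define H where "H s = (1 - cos s) ^ j * P (1 + cos s)" for s
  have dP: "(P has_real_derivative P' w) (at w)" for w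
    unfolding P_def P'_def by (auto intro!: derivative_eq_intros simp: mult_ac)
  have "(H has_real_derivative sin s ^ (2 * j - 1)) (at s)" for s
  proof -
    have split_power: "(1 - cos s) ^ j = (1 - cos s) * (1 - cos s) ^ (j - 1)"
      using j by (cases j) simp_all
    have "(H has_real_derivative
            sin s * (1 - cos s) ^ (j - 1) * (real j * P (1 + cos s) - (1 - cos s) * P' (1 + cos s))) (at s)"
      unfolding H_def
      by (auto intro!: derivative_eq_intros DERIV_chain2[OF dP] simp: split_power algebra_simps)
    also have "real j * P (1 + cos s) - (1 - cos s) * P' (1 + cos s) = (1 + cos s) ^ (j - 1)"
      using coef_polynomial_identity[OF j, of "1 + cos s"] by (simp add: P_def P'_def)
    also have "sin s * (1 - cos s) ^ (j - 1) * (1 + cos s) ^ (j - 1) = sin s * (sin s ^ 2) ^ (j - 1)"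
      by (simp only: mult.assoc power_mult_distrib[symmetric] one_minus_cos_times_one_plus_cos)
    also have "\<dots> = sin s ^ (2 * j - 1)"
      using j by (cases j) (simp_all add: power_mult[symmetric])
    finally show ?thesis .
  qed
  then have "((\<lambda>s. sin s ^ (2 * j - 1)) has_integral (H t - H 0)) {0..t}"
    by (intro fundamental_theorem_of_calculus[OF t])
       (auto intro: has_field_derivative_at_within simp: has_real_derivative_iff_has_vector_derivative[symmetric])
  moreover have "H 0 = 0"
    using j by (simp add: H_def)
  ultimately show ?thesis
    by (simp add: Ik_def H_def P_def integral_unique)
qed

lemma phik_even:
  assumes j: "j \<ge> 1" and t: "0 < t" "t < pi"
  shows "phik (2 * j) t * (1 + cos t) / sin t = (\<Sum>i<j. coef j (i + 1) / (1 + cos t) ^ i)"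
proof -
  have "sin t > 0" using t by (simp add: sin_gt_zero)
  then have "(cos t)\<^sup>2 < 1" by (simp add: cos_squared_eq)
  then have "1 + cos t > 0" "1 - cos t > 0"
    by (auto simp: abs_square_less_1)
  have sin_power: "sin t ^ (2 * j) = (1 - cos t) ^ j * (1 + cos t) ^ j"
    unfolding power_mult one_minus_cos_times_one_plus_cos[symmetric] by (rule power_mult_distrib)
  have "phik (2 * j) t * (1 + cos t) / sin t = Ik (2 * j) t * (1 + cos t) / sin t ^ (2 * j)"
    using t j by (cases j) (simp_all add: phik_def)
  also have "\<dots> = (1 - cos t) ^ j * (\<Sum>i<j. coef j (i + 1) * (1 + cos t) ^ (j - 1 - i)) * (1 + cos t)
                    / ((1 - cos t) ^ j * (1 + cos t) ^ j)"
    using t by (simp only: Ik_even_closed_form[OF j] sin_power less_imp_le)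
  also have "\<dots> = (\<Sum>i<j. coef j (i + 1) * (1 + cos t) ^ (j - 1 - i)) * (1 + cos t) / (1 + cos t) ^ j"
    using \<open>1 - cos t > 0\<close> by (simp add: mult.assoc)
  also have "\<dots> = (\<Sum>i<j. coef j (i + 1) / (1 + cos t) ^ i)"
  proof -
    have "c * w ^ (j - 1 - i) * w / w ^ j = c / w ^ i" if "i < j" "w > 0" for c w :: real and i
    proof -
      from \<open>i < j\<close> have "w ^ j = w ^ (j - 1 - i) * w * w ^ i"
        by (simp add: power_add[symmetric] power_Suc2[symmetric] Suc_diff_Suc)
      with \<open>w > 0\<close> show ?thesis by (simp add: field_simps)
    qed
    with \<open>1 + cos t > 0\<close> show ?thesis
      by (simp add: sum_distrib_right sum_divide_distrib)
  qed
  finally show ?thesis .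
qed

theorem lemma2p8:
  fixes p x y :: "'a::euclidean_space" and j k :: nat and R :: real
  assumes "j \<ge> 1" and "k = 2 * j"
    and "p \<in> sphere 0 1" and "0 < R" and "R < pi / 2"
    and "x \<in> sphere 0 1" and "y \<in> sphere 0 1"
    and "gdist p x = R" and "gdist p y = R" and "x \<noteq> y"
  shows "tan R * inner (Psi k y x) (sgrad (gdist p) x)
           = - (\<Sum>i<j. coef j (i + 1) / (1 - cos (gdist y x)) ^ i)"
proof -
  note j = assms(1) and p = assms(3) and x = assms(6) and y = assms(7)
  have "cos R > 0" "sin R > 0"
    using assms(4,5) by (simp_all add: cos_gt_zero sin_gt_zero)
  have px: "inner p x = cos R" and py: "inner p y = cos R"
    using cos_gdist[OF p x] cos_gdist[OF p y] assms(8,9) by simp_all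
  have "x \<noteq> - y"
    using px py \<open>cos R > 0\<close> by auto
  define r where "r = gdist y x"
  have r: "0 < r" "r < pi"
    using gdist_strict_bounds[OF y x assms(10) \<open>x \<noteq> - y\<close>] by (simp_all add: r_def)
  have "inner (y - cos r *\<^sub>R x) (p - cos R *\<^sub>R x) = cos R * (1 - cos r)"
    using px py cos_gdist[OF y x] x
    by (simp add: r_def inner_diff_left inner_diff_right inner_commute dot_square_norm algebra_simps)
  moreover have "Psi k y x = (phik k (pi - r) / sin r) *\<^sub>R (y - cos r *\<^sub>R x)"
    unfolding r_def using r by (intro Psi_eq[OF y x]) (simp_all add: r_def)
  moreover have "sgrad (gdist p) x = (- (1 / sin R)) *\<^sub>R (p - cos R *\<^sub>R x)"
    using sgrad_gdist[OF p x] assms(4,5,8) by simp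
  ultimately have "tan R * inner (Psi k y x) (sgrad (gdist p) x)
      = - (phik k (pi - r) * (1 - cos r) / sin r)"
    using \<open>cos R > 0\<close> \<open>sin R > 0\<close> by (simp add: tan_def)
  also have "\<dots> = - (phik (2 * j) (pi - r) * (1 + cos (pi - r)) / sin (pi - r))"
    using assms(2) by simp
  also have "\<dots> = - (\<Sum>i<j. coef j (i + 1) / (1 - cos r) ^ i)"
    using phik_even[OF j, of "pi - r"] r by simp
  finally show ?thesis by (simp add: r_def)
qed

end
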